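(* Let $(\mathbf{x}_1,\mathbf{t}_1),(\mathbf{x}_2,\mathbf{t}_2),\dots$ be i.i.d. pairs drawn from a joint distribution $p(\mathbf{x},\mathbf{t})$ with marginals $p(\mathbf{x})$ and $p(\mathbf{t})$. Let $\mathbf{f}_x,\mathbf{f}_t$ be measurable encoders taking values in a compact set $K\subset\mathbb{R}^D$, let $d:K\times K\to\mathbb{R}$ be continuous, and fix $\tau>0$. Let $\mathcal{L}_N$ denote the multimodal contrastive loss computed on the first $N$ pairs. Then, almost surely, $$\lim_{N\to\infty}\big(\mathcal{L}_N-2\log N\big)=2\,\mathbb{E}_{(\mathbf{x},\mathbf{t})\sim p(\mathbf{x},\mathbf{t})}\big[d(\mathbf{f}_x(\mathbf{x}),\mathbf{f}_t(\mathbf{t}))/\tau\big]+\mathbb{E}_{\mathbf{x}\sim p(\mathbf{x})}\Big[\log\mathbb{E}_{\mathbf{t}\sim p(\mathbf{t})}\big[e^{-d(\mathbf{f}_x(\mathbf{x}),\mathbf{f}_t(\mathbf{t}))/\tau}\big]\Big]+\mathbb{E}_{\mathbf{t}\sim p(\mathbf{t})}\Big[\log\mathbb{E}_{\mathbf{x}\sim p(\mathbf{x})}\big[e^{-d(\mathbf{f}_x(\mathbf{x}),\mathbf{f}_t(\mathbf{t}))/\tau}\big]\Big],$$ where in the inner expectations $\mathbf{x}$ and $\mathbf{t}$ are drawn independently from their marginals.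
   Context: The multimodal contrastive loss on $N$ pairs $(\mathbf{x}_i,\mathbf{t}_i)_{i=1}^N$ with encoders $\mathbf{f}_x,\mathbf{f}_t$, "distance" $d$ and temperature $\tau>0$ is $$\mathcal{L}_N=-\frac1N\sum_{i=1}^N\log\frac{e^{-d(\mathbf{f}_x(\mathbf{x}_i),\mathbf{f}_t(\mathbf{t}_i))/\tau}}{\sum_{j=1}^N e^{-d(\mathbf{f}_x(\mathbf{x}_i),\mathbf{f}_t(\mathbf{t}_j))/\tau}}-\frac1N\sum_{i=1}^N\log\frac{e^{-d(\mathbf{f}_x(\mathbf{x}_i),\mathbf{f}_t(\mathbf{t}_i))/\tau}}{\sum_{j=1}^N e^{-d(\mathbf{f}_x(\mathbf{x}_j),\mathbf{f}_t(\mathbf{t}_i))/\tau}}.$$ *)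

theory Defs
  imports "HOL-Probability.Probability"
begin

definition contrastive_loss ::
  "('x \<Rightarrow> 'e) \<Rightarrow> ('t \<Rightarrow> 'e) \<Rightarrow> ('e \<Rightarrow> 'e \<Rightarrow> real) \<Rightarrow> real \<Rightarrow>
   (nat \<Rightarrow> 'x) \<Rightarrow> (nat \<Rightarrow> 't) \<Rightarrow> nat \<Rightarrow> real" where
  "contrastive_loss fx ft d tau xs ts N =
     - (1 / real N) * (\<Sum>i<N. ln (exp (- d (fx (xs i)) (ft (ts i)) / tau) /
              (\<Sum>j<N. exp (- d (fx (xs i)) (ft (ts j)) / tau))))
     - (1 / real N) * (\<Sum>i<N. ln (exp (- d (fx (xs i)) (ft (ts i)) / tau) /
              (\<Sum>j<N. exp (- d (fx (xs j)) (ft (ts i)) / tau))))"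

end

theory Submission
  imports Defs
begin

text \<open>
  After dividing each normalising sum by \<open>N\<close>, \<open>L\<^sub>N - 2 log N\<close> becomes twice the mean of
  \<open>d/\<tau>\<close> over the pairs plus two terms \<open>(1/N) \<Sum>\<^sub>i log ((1/N) \<Sum>\<^sub>j g(a\<^sub>i, b\<^sub>j))\<close> with
  \<open>g = exp(-d/\<tau>)\<close> and \<open>a\<^sub>i, b\<^sub>j\<close> the encoded samples.  All variables are bounded, so the
  strong law of large numbers follows from Hoeffding's inequality and Borel--Cantelli; it settles
  the first term.  For the others, \<open>g\<close> is uniformly continuous on the compact \<open>K \<times> K\<close>, so the
  inner means \<open>a \<mapsto> (1/N) \<Sum>\<^sub>j g(a, b\<^sub>j)\<close> form an equicontinuous family.  By the strong law they
  converge almost surely to \<open>G(a) = E g(a, f\<^sub>t(t))\<close> at every point of a countable dense subset of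
  \<open>K\<close>, hence uniformly on \<open>K\<close>; as \<open>g\<close> is bounded away from \<open>0\<close>, so do their logarithms, and the
  outer mean converges to \<open>E log G(f\<^sub>x(x))\<close> by the strong law once more.
\<close>

lemma borel_measurable_continuous_on_comp:
  assumes "continuous_on S F" "\<phi> \<in> borel_measurable N" "\<And>x. x \<in> space N \<Longrightarrow> \<phi> x \<in> S"
  shows "(\<lambda>x. F (\<phi> x)) \<in> borel_measurable N"
  using measurable_compose[OF measurable_restrict_space2[OF _ assms(2)]
      borel_measurable_continuous_on_restrict[OF assms(1)]] assms(3) by blast

lemma continuous_on_case_prod_swap:
  assumes "continuous_on (A \<times> B) (\<lambda>(a, b). f a b)"
  shows "continuous_on (B \<times> A) (\<lambda>(b, a). f a b)"
proof -
  have "continuous_on (B \<times> A) ((\<lambda>(a, b). f a b) \<circ> prod.swap)"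
    by (rule continuous_on_compose[OF continuous_on_swap]) (simp add: product_swap assms)
  then show ?thesis by (simp add: comp_def case_prod_beta')
qed

lemma compact_continuous_pos_bounds:
  fixes f :: "'a::topological_space \<Rightarrow> real"
  assumes "compact S" "continuous_on S f" "\<And>x. x \<in> S \<Longrightarrow> f x > 0"
  obtains m B where "m > 0" "\<And>x. x \<in> S \<Longrightarrow> f x \<in> {m..B}"
proof (cases "S = {}")
  case False
  obtain x0 where "x0 \<in> S" "\<And>y. y \<in> S \<Longrightarrow> f x0 \<le> f y"
    using continuous_attains_inf[OF assms(1) False assms(2)] by blast
  moreover obtain x1 where "\<And>y. y \<in> S \<Longrightarrow> f y \<le> f x1"
    using continuous_attains_sup[OF assms(1) False assms(2)] by blast
  ultimately show ?thesis using that[of "f x0" "f x1"] assms(3) by auto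
qed (use that[of 1 1] in auto)

lemma abs_mean_diff_le:
  fixes u v :: "nat \<Rightarrow> real"
  assumes "\<And>j. j < N \<Longrightarrow> \<bar>u j - v j\<bar> \<le> e" "e \<ge> 0"
  shows "\<bar>(\<Sum>j<N. u j) / real N - (\<Sum>j<N. v j) / real N\<bar> \<le> e"
proof (cases "N = 0")
  case False
  have "\<bar>(\<Sum>j<N. u j) / real N - (\<Sum>j<N. v j) / real N\<bar> = \<bar>\<Sum>j<N. u j - v j\<bar> / real N"
    by (simp add: sum_subtractf diff_divide_distrib[symmetric])
  also have "\<dots> \<le> (\<Sum>j<N. \<bar>u j - v j\<bar>) / real N"
    by (intro divide_right_mono sum_abs) auto
  also have "\<dots> \<le> real N * e / real N"
    using sum_bounded_above[of "{..<N}" "\<lambda>j. \<bar>u j - v j\<bar>" e] assms by (intro divide_right_mono) auto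
  finally show ?thesis using False by simp
qed (use assms in simp)

lemma mean_in_interval:
  fixes u :: "nat \<Rightarrow> real"
  assumes "N > 0" "\<And>j. j < N \<Longrightarrow> u j \<in> {m..B}"
  shows "(\<Sum>j<N. u j) / real N \<in> {m..B}"
proof -
  have "real N * m \<le> (\<Sum>j<N. u j)" "(\<Sum>j<N. u j) \<le> real N * B"
    using sum_bounded_below[of "{..<N}" m u] sum_bounded_above[of "{..<N}" u B] assms(2) by auto
  then show ?thesis using assms(1) by (simp add: field_simps)
qed

lemma tendsto_mean_uniform_limit:
  fixes \<phi> :: "nat \<Rightarrow> 'a \<Rightarrow> real"
  assumes "uniform_limit K \<phi> \<psi> sequentially" "\<And>i. a i \<in> K"
    and "((\<lambda>N. (\<Sum>i<N. \<psi> (a i)) / real N) \<longlongrightarrow> L) sequentially"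
  shows "((\<lambda>N. (\<Sum>i<N. \<phi> N (a i)) / real N) \<longlongrightarrow> L) sequentially"
proof -
  have "((\<lambda>N. (\<Sum>i<N. \<phi> N (a i)) / real N - (\<Sum>i<N. \<psi> (a i)) / real N) \<longlongrightarrow> 0) sequentially"
  proof (rule tendstoI)
    fix e :: real assume "e > 0"
    then have "e / 2 > 0" by simp
    from uniform_limitD[OF assms(1) this]
    show "eventually (\<lambda>N. dist ((\<Sum>i<N. \<phi> N (a i)) / real N - (\<Sum>i<N. \<psi> (a i)) / real N) 0 < e) sequentially"
    proof eventually_elim
      case (elim N)
      then have "\<bar>(\<Sum>i<N. \<phi> N (a i)) / real N - (\<Sum>i<N. \<psi> (a i)) / real N\<bar> \<le> e / 2"
        using assms(2) \<open>e > 0\<close> by (intro abs_mean_diff_le) (auto simp: dist_real_def intro: less_imp_le)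
      with \<open>e > 0\<close> show ?case by simp
    qed
  qed
  from tendsto_add[OF this assms(3)] show ?thesis by simp
qed

lemma uniformly_equicontinuous_on_compact:
  fixes g :: "'a::metric_space \<Rightarrow> 'b::metric_space \<Rightarrow> real"
  assumes "compact K" "compact L" "continuous_on (K \<times> L) (\<lambda>(a, b). g a b)" "e > 0"
  obtains \<delta> where "\<delta> > 0"
    "\<And>a a' b. a \<in> K \<Longrightarrow> a' \<in> K \<Longrightarrow> b \<in> L \<Longrightarrow> dist a a' < \<delta> \<Longrightarrow> \<bar>g a b - g a' b\<bar> < e"
proof -
  have "uniformly_continuous_on (K \<times> L) (\<lambda>(a, b). g a b)"
    using assms by (intro compact_uniformly_continuous compact_Times)
  then obtain \<delta> where "\<delta> > 0" and \<delta>: "\<And>x x'. x \<in> K \<times> L \<Longrightarrow> x' \<in> K \<times> L \<Longrightarrow> dist x' x < \<delta> \<Longrightarrow>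
      dist ((\<lambda>(a, b). g a b) x') ((\<lambda>(a, b). g a b) x) < e"
    using assms(4) unfolding uniformly_continuous_on_def by meson
  show ?thesis
  proof (rule that[OF \<open>\<delta> > 0\<close>])
    fix a a' b assume "a \<in> K" "a' \<in> K" "b \<in> L" "dist a a' < \<delta>"
    then show "\<bar>g a b - g a' b\<bar> < e"
      using \<delta>[of "(a', b)" "(a, b)"] by (simp add: dist_Pair_Pair dist_real_def)
  qed
qed

lemma equicontinuous_kernel_means:
  fixes g :: "'a::metric_space \<Rightarrow> 'b::metric_space \<Rightarrow> real"
  assumes "compact K" "compact L" "continuous_on (K \<times> L) (\<lambda>(a, b). g a b)"
    and "\<And>j. b j \<in> L" "e > 0"
  shows "\<exists>\<delta>>0. \<forall>N. \<forall>a\<in>K. \<forall>a'\<in>K. dist a a' < \<delta> \<longrightarrow>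
           \<bar>(\<Sum>j<N. g a (b j)) / real N - (\<Sum>j<N. g a' (b j)) / real N\<bar> < e"
proof -
  obtain \<delta> where "\<delta> > 0" and \<delta>: "\<And>a a' b. a \<in> K \<Longrightarrow> a' \<in> K \<Longrightarrow> b \<in> L \<Longrightarrow> dist a a' < \<delta> \<Longrightarrow>
      \<bar>g a b - g a' b\<bar> < e / 2"
    using uniformly_equicontinuous_on_compact[OF assms(1-3), of "e / 2"] assms(5) by auto
  show ?thesis
  proof (intro exI[of _ \<delta>] conjI allI ballI impI)
    fix N a a' assume "a \<in> K" "a' \<in> K" "dist a a' < \<delta>"
    then have "\<bar>(\<Sum>j<N. g a (b j)) / real N - (\<Sum>j<N. g a' (b j)) / real N\<bar> \<le> e / 2"
      using assms(4,5) by (intro abs_mean_diff_le less_imp_le \<delta>) auto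
    then show "\<bar>(\<Sum>j<N. g a (b j)) / real N - (\<Sum>j<N. g a' (b j)) / real N\<bar> < e"
      using assms(5) by linarith
  qed (fact \<open>\<delta> > 0\<close>)
qed

lemma uniform_limit_dense_equicontinuous:
  fixes h :: "'i \<Rightarrow> 'a::metric_space \<Rightarrow> real"
  assumes "compact K" "C \<subseteq> K" "K \<subseteq> closure C"
    and equi: "\<And>e. e > 0 \<Longrightarrow> \<exists>\<delta>>0. \<forall>n. \<forall>a\<in>K. \<forall>a'\<in>K. dist a a' < \<delta> \<longrightarrow> \<bar>h n a - h n a'\<bar> < e"
    and "continuous_on K G"
    and lim: "\<And>c. c \<in> C \<Longrightarrow> ((\<lambda>n. h n c) \<longlongrightarrow> G c) F"
  shows "uniform_limit K h G F"
proof (rule uniform_limitI)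
  fix e :: real assume "e > 0"
  then obtain \<delta>1 where "\<delta>1 > 0" and \<delta>1: "\<And>n a a'. a \<in> K \<Longrightarrow> a' \<in> K \<Longrightarrow> dist a a' < \<delta>1 \<Longrightarrow>
      \<bar>h n a - h n a'\<bar> < e / 3"
    using equi[of "e / 3"] by auto
  have "uniformly_continuous_on K G" "e / 3 > 0" using assms \<open>e > 0\<close> by (auto intro: compact_uniformly_continuous)
  then obtain \<delta>2 where "\<delta>2 > 0" and \<delta>2: "\<And>a a'. a \<in> K \<Longrightarrow> a' \<in> K \<Longrightarrow> dist a' a < \<delta>2 \<Longrightarrow>
      dist (G a') (G a) < e / 3"
    unfolding uniformly_continuous_on_def by blast
  define \<delta> where "\<delta> = min \<delta>1 \<delta>2"
  have "\<delta> > 0" using \<open>\<delta>1 > 0\<close> \<open>\<delta>2 > 0\<close> by (simp add: \<delta>_def)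
  have "K \<subseteq> (\<Union>c\<in>C. ball c \<delta>)"
  proof
    fix a assume "a \<in> K"
    then obtain c where "c \<in> C" "dist c a < \<delta>"
      using assms(3) \<open>\<delta> > 0\<close> closure_approachable by blast
    then show "a \<in> (\<Union>c\<in>C. ball c \<delta>)" by auto
  qed
  then obtain C' where C': "C' \<subseteq> C" "finite C'" "K \<subseteq> (\<Union>c\<in>C'. ball c \<delta>)"
    using compactE_image[OF assms(1), of C "\<lambda>c. ball c \<delta>"] by blast
  have "eventually (\<lambda>n. \<forall>c\<in>C'. dist (h n c) (G c) < e / 3) F"
    using C' \<open>e > 0\<close> by (intro eventually_ball_finite ballI tendstoD lim) auto
  then show "eventually (\<lambda>n. \<forall>a\<in>K. dist (h n a) (G a) < e) F"
  proof eventually_elim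
    case (elim n)
    show ?case
    proof
      fix a assume "a \<in> K"
      then obtain c where c: "c \<in> C'" "dist c a < \<delta>" using C'(3) by auto
      then have "c \<in> K" using C'(1) assms(2) by auto
      have "\<bar>h n a - h n c\<bar> < e / 3"
        using \<open>a \<in> K\<close> \<open>c \<in> K\<close> c by (intro \<delta>1) (auto simp: \<delta>_def dist_commute)
      moreover have "dist (G c) (G a) < e / 3"
        using \<open>a \<in> K\<close> \<open>c \<in> K\<close> c by (intro \<delta>2) (auto simp: \<delta>_def)
      moreover have "dist (h n c) (G c) < e / 3" using elim c by auto
      ultimately show "dist (h n a) (G a) < e" unfolding dist_real_def by linarith
    qed
  qed
qed

lemma (in prob_space) prob_mean_deviation_le:
  fixes Z :: "nat \<Rightarrow> 'a \<Rightarrow> real"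
  assumes indep: "indep_vars (\<lambda>_. borel) Z UNIV"
    and bnd: "\<And>i \<omega>. \<omega> \<in> space M \<Longrightarrow> \<bar>Z i \<omega>\<bar> \<le> B"
    and mean: "\<And>i. expectation (Z i) = \<mu>" and "e > 0"
  shows "prob {\<omega>\<in>space M. real N * e \<le> \<bar>(\<Sum>i<N. Z i \<omega>) - real N * \<mu>\<bar>}
           \<le> 2 * exp (- e\<^sup>2 / (2 * (\<bar>B\<bar> + 1)\<^sup>2)) ^ N"
proof (cases "N = 0")
  case False
  define B' where "B' = \<bar>B\<bar> + 1" \<comment> \<open>a nondegenerate interval, as Hoeffding requires\<close>
  interpret Hoeffding_ineq M "{..<N}" Z "\<lambda>_. - B'" "\<lambda>_. B'" "real N * \<mu>"
  proof unfold_locales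
    show "indep_vars (\<lambda>_. borel) Z {..<N}"
      using indep by (rule indep_vars_subset) auto
    show "AE \<omega> in M. Z i \<omega> \<in> {- B'..B'}" for i
    proof (intro AE_I2)
      fix \<omega> assume "\<omega> \<in> space M"
      then have "\<bar>Z i \<omega>\<bar> \<le> B" by (rule bnd)
      then show "Z i \<omega> \<in> {- B'..B'}" unfolding B'_def by auto
    qed
  qed (auto simp: mean)
  have "B' > 0" by (simp add: B'_def add_pos_nonneg)
  then have "(\<Sum>i<N. (B' - - B')\<^sup>2) > 0" using False by simp
  from Hoeffding_ineq_abs_ge[OF _ this, of "real N * e"] \<open>e > 0\<close>
  have "prob {\<omega>\<in>space M. real N * e \<le> \<bar>(\<Sum>i<N. Z i \<omega>) - real N * \<mu>\<bar>}
          \<le> 2 * exp (- 2 * (real N * e)\<^sup>2 / (\<Sum>i<N. (B' - - B')\<^sup>2))" by simp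
  also have "- 2 * (real N * e)\<^sup>2 / (\<Sum>i<N. (B' - - B')\<^sup>2) = real N * (- e\<^sup>2 / (2 * B'\<^sup>2))"
    using False \<open>B' > 0\<close> by (simp add: power2_eq_square field_simps)
  also have "exp (real N * (- e\<^sup>2 / (2 * B'\<^sup>2))) = exp (- e\<^sup>2 / (2 * B'\<^sup>2)) ^ N"
    by (rule exp_of_nat_mult)
  finally show ?thesis unfolding B'_def .
qed (simp add: prob_space)

lemma (in prob_space) AE_eventually_mean_dist_less:
  fixes Z :: "nat \<Rightarrow> 'a \<Rightarrow> real"
  assumes indep: "indep_vars (\<lambda>_. borel) Z UNIV"
    and bnd: "\<And>i \<omega>. \<omega> \<in> space M \<Longrightarrow> \<bar>Z i \<omega>\<bar> \<le> B"
    and mean: "\<And>i. expectation (Z i) = \<mu>" and "e > 0"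
  shows "AE \<omega> in M. eventually (\<lambda>N. dist ((\<Sum>i<N. Z i \<omega>) / real N) \<mu> < e) sequentially"
proof -
  have [measurable]: "Z i \<in> borel_measurable M" for i
    using indep unfolding indep_vars_def by blast
  define A where "A N = {\<omega>\<in>space M. real N * e \<le> \<bar>(\<Sum>i<N. Z i \<omega>) - real N * \<mu>\<bar>}" for N
  have "summable (\<lambda>N. 2 * exp (- e\<^sup>2 / (2 * (\<bar>B\<bar> + 1)\<^sup>2)) ^ N)"
    using \<open>e > 0\<close> by (intro summable_mult summable_geometric) (simp add: add_pos_nonneg)
  then have "summable (\<lambda>N. measure M (A N))"
    unfolding A_def by (rule summable_comparison_test'[where N = 0])
      (use prob_mean_deviation_le[OF indep bnd mean \<open>e > 0\<close>] in auto)
  then have "AE \<omega> in M. eventually (\<lambda>N. \<omega> \<in> space M - A N) sequentially"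
    by (intro borel_cantelli_AE1) (auto simp: A_def emeasure_eq_measure)
  then show ?thesis
  proof (rule AE_mp, intro AE_I2 impI)
    fix \<omega> assume "\<omega> \<in> space M" and ev: "eventually (\<lambda>N. \<omega> \<in> space M - A N) sequentially"
    from ev eventually_gt_at_top[of 0]
    show "eventually (\<lambda>N. dist ((\<Sum>i<N. Z i \<omega>) / real N) \<mu> < e) sequentially"
    proof eventually_elim
      case (elim N)
      then have "\<bar>(\<Sum>i<N. Z i \<omega>) - real N * \<mu>\<bar> < real N * e"
        by (auto simp: A_def not_le)
      also have "\<bar>(\<Sum>i<N. Z i \<omega>) - real N * \<mu>\<bar> = real N * dist ((\<Sum>i<N. Z i \<omega>) / real N) \<mu>"
        using elim by (simp add: dist_real_def field_simps abs_mult[symmetric])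
      finally show ?case using elim by simp
    qed
  qed
qed

lemma (in prob_space) strong_law_bounded:
  fixes Z :: "nat \<Rightarrow> 'a \<Rightarrow> real"
  assumes indep: "indep_vars (\<lambda>_. borel) Z UNIV"
    and bnd: "\<And>i \<omega>. \<omega> \<in> space M \<Longrightarrow> \<bar>Z i \<omega>\<bar> \<le> B"
    and mean: "\<And>i. expectation (Z i) = \<mu>"
  shows "AE \<omega> in M. ((\<lambda>N. (\<Sum>i<N. Z i \<omega>) / real N) \<longlongrightarrow> \<mu>) sequentially"
proof -
  have "AE \<omega> in M. \<forall>k. eventually (\<lambda>N. dist ((\<Sum>i<N. Z i \<omega>) / real N) \<mu> < inverse (Suc k)) sequentially"
    by (subst AE_all_countable) (auto intro!: AE_eventually_mean_dist_less[OF indep bnd mean])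
  then show ?thesis
  proof (rule AE_mp, intro AE_I2 impI tendstoI)
    fix \<omega> and e :: real assume "e > 0"
      and H: "\<forall>k. eventually (\<lambda>N. dist ((\<Sum>i<N. Z i \<omega>) / real N) \<mu> < inverse (Suc k)) sequentially"
    then obtain k where "inverse (real (Suc k)) < e" using reals_Archimedean by blast
    with H[rule_format, of k] show "eventually (\<lambda>N. dist ((\<Sum>i<N. Z i \<omega>) / real N) \<mu> < e) sequentially"
      by (auto elim: eventually_mono)
  qed
qed

lemma (in prob_space) strong_law_continuous_on_compact:
  assumes indep: "indep_vars (\<lambda>_. S) Y UNIV" and distr: "\<And>i. distr M S (Y i) = P"
    and e: "e \<in> borel_measurable S" "\<And>z. z \<in> space S \<Longrightarrow> e z \<in> K"
    and K: "compact K" and \<phi>: "continuous_on K \<phi>"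
  shows "AE \<omega> in M. ((\<lambda>N. (\<Sum>i<N. \<phi> (e (Y i \<omega>))) / real N) \<longlongrightarrow> (\<integral>z. \<phi> (e z) \<partial>P)) sequentially"
proof -
  have Y: "Y i \<in> M \<rightarrow>\<^sub>M S" for i
    using indep unfolding indep_vars_def by blast
  have meas: "(\<lambda>z. \<phi> (e z)) \<in> borel_measurable S"
    using \<phi> e by (rule borel_measurable_continuous_on_comp)
  obtain B where B: "\<And>y. y \<in> \<phi> ` K \<Longrightarrow> norm y \<le> B"
    using compact_imp_bounded[OF compact_continuous_image[OF \<phi> K]] unfolding bounded_iff by blast
  show ?thesis
  proof (rule strong_law_bounded)
    show "indep_vars (\<lambda>_. borel) (\<lambda>i \<omega>. \<phi> (e (Y i \<omega>))) UNIV"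
      using indep meas by (rule indep_vars_compose2)
    show "\<bar>\<phi> (e (Y i \<omega>))\<bar> \<le> B" if "\<omega> \<in> space M" for i \<omega>
      using B e(2)[OF measurable_space[OF Y that]] by simp
    show "expectation (\<lambda>\<omega>. \<phi> (e (Y i \<omega>))) = (\<integral>z. \<phi> (e z) \<partial>P)" for i
      unfolding distr[of i, symmetric] by (rule integral_distr[symmetric, OF Y meas])
  qed
qed

lemma (in prob_space) indep_identically_distributed_compose:
  assumes indep: "indep_vars (\<lambda>_. S) Y UNIV" and distr: "\<And>i. distr M S (Y i) = P"
    and h: "h \<in> S \<rightarrow>\<^sub>M S'"
  shows "indep_vars (\<lambda>_. S') (\<lambda>i \<omega>. h (Y i \<omega>)) UNIV"
    and "distr M S' (\<lambda>\<omega>. h (Y i \<omega>)) = distr P S' h"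
proof -
  show "indep_vars (\<lambda>_. S') (\<lambda>i \<omega>. h (Y i \<omega>)) UNIV"
    using indep h by (rule indep_vars_compose2)
  have "Y i \<in> M \<rightarrow>\<^sub>M S" using indep unfolding indep_vars_def by blast
  then show "distr M S' (\<lambda>\<omega>. h (Y i \<omega>)) = distr P S' h"
    unfolding distr[of i, symmetric] by (subst distr_distr[OF h]) (simp_all add: comp_def)
qed

lemma (in prob_space) integrable_continuous_on_comp:
  fixes F :: "'b::topological_space \<Rightarrow> real"
  assumes "compact L" "continuous_on L F" "f \<in> borel_measurable M" "\<And>t. t \<in> space M \<Longrightarrow> f t \<in> L"
  shows "integrable M (\<lambda>t. F (f t))"
proof -
  obtain B where B: "\<And>y. y \<in> F ` L \<Longrightarrow> norm y \<le> B"
    using compact_imp_bounded[OF compact_continuous_image[OF assms(2,1)]] unfolding bounded_iff by blast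
  show ?thesis
  proof (rule integrable_const_bound[where B = B])
    show "AE t in M. norm (F (f t)) \<le> B"
      using B assms(4) by (intro AE_I2) blast
    show "(\<lambda>t. F (f t)) \<in> borel_measurable M"
      using assms(2-4) by (rule borel_measurable_continuous_on_comp)
  qed
qed

lemma (in prob_space) integral_continuous_on_comp_in_interval:
  fixes F :: "'b::topological_space \<Rightarrow> real"
  assumes "compact L" "continuous_on L F" "f \<in> borel_measurable M" "\<And>t. t \<in> space M \<Longrightarrow> f t \<in> L"
    and "\<And>b. b \<in> L \<Longrightarrow> F b \<in> {m..B}"
  shows "(\<integral>t. F (f t) \<partial>M) \<in> {m..B}"
  using assms integrable_continuous_on_comp[OF assms(1-4)]
  by (auto intro!: integral_ge_const integral_le_const AE_I2)

lemma (in prob_space) continuous_on_kernel_integral: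
  fixes g :: "'e::metric_space \<Rightarrow> 'f::metric_space \<Rightarrow> real"
  assumes K: "compact K" and L: "compact L" and g: "continuous_on (K \<times> L) (\<lambda>(a, b). g a b)"
    and f: "f \<in> borel_measurable M" "\<And>t. t \<in> space M \<Longrightarrow> f t \<in> L"
  shows "continuous_on K (\<lambda>a. \<integral>t. g a (f t) \<partial>M)"
  unfolding continuous_on_iff
proof (intro ballI allI impI)
  fix a and e :: real assume "a \<in> K" "e > 0"
  then obtain \<delta> where "\<delta> > 0" and \<delta>: "\<And>a a' b. a \<in> K \<Longrightarrow> a' \<in> K \<Longrightarrow> b \<in> L \<Longrightarrow> dist a a' < \<delta> \<Longrightarrow>
      \<bar>g a b - g a' b\<bar> < e / 2"
    using uniformly_equicontinuous_on_compact[OF K L g, of "e / 2"] by auto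
  have int: "integrable M (\<lambda>t. g a (f t))" if "a \<in> K" for a
    using continuous_on_o_Pair[OF g that] by (intro integrable_continuous_on_comp[OF L _ f]) (simp add: comp_def)
  show "\<exists>d>0. \<forall>a'\<in>K. dist a' a < d \<longrightarrow> dist (\<integral>t. g a' (f t) \<partial>M) (\<integral>t. g a (f t) \<partial>M) < e"
  proof (intro exI[of _ \<delta>] conjI ballI impI)
    fix a' assume "a' \<in> K" "dist a' a < \<delta>"
    have "\<bar>(\<integral>t. g a' (f t) \<partial>M) - (\<integral>t. g a (f t) \<partial>M)\<bar> = \<bar>\<integral>t. g a' (f t) - g a (f t) \<partial>M\<bar>"
      using int \<open>a \<in> K\<close> \<open>a' \<in> K\<close> by simp
    also have "\<dots> \<le> (\<integral>t. \<bar>g a' (f t) - g a (f t)\<bar> \<partial>M)"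
      by (rule integral_abs_bound)
    also have "\<dots> \<le> e / 2"
      using int \<open>a \<in> K\<close> \<open>a' \<in> K\<close> \<open>dist a' a < \<delta>\<close> f(2)
      by (intro integral_le_const AE_I2 less_imp_le \<delta>) auto
    finally show "dist (\<integral>t. g a' (f t) \<partial>M) (\<integral>t. g a (f t) \<partial>M) < e"
      using \<open>e > 0\<close> by (simp add: dist_real_def)
  qed (fact \<open>\<delta> > 0\<close>)
qed

lemma tendsto_mean_ln_kernel_mean:
  fixes g :: "'e::metric_space \<Rightarrow> 'f::metric_space \<Rightarrow> real"
  assumes K: "compact K" and L: "compact L" and g: "continuous_on (K \<times> L) (\<lambda>(a, b). g a b)"
    and g_bounds: "\<And>a b. a \<in> K \<Longrightarrow> b \<in> L \<Longrightarrow> g a b \<in> {m..B}" and "m > 0"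
    and G: "continuous_on K G" "\<And>a. a \<in> K \<Longrightarrow> G a \<in> {m..B}"
    and C: "C \<subseteq> K" "K \<subseteq> closure C"
    and a: "\<And>i. a i \<in> K" and b: "\<And>j. b j \<in> L"
    and lim_C: "\<And>c. c \<in> C \<Longrightarrow> ((\<lambda>N. (\<Sum>j<N. g c (b j)) / real N) \<longlongrightarrow> G c) sequentially"
    and lim_G: "((\<lambda>N. (\<Sum>i<N. ln (G (a i))) / real N) \<longlongrightarrow> \<Lambda>) sequentially"
  shows "((\<lambda>N. (\<Sum>i<N. ln ((\<Sum>j<N. g (a i) (b j)) / real N)) / real N) \<longlongrightarrow> \<Lambda>) sequentially"
proof -
  define h where "h N x = (\<Sum>j<N. g x (b j)) / real N" for N x
  have "uniform_limit K h G sequentially"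
    unfolding h_def using equicontinuous_kernel_means[OF K L g b]
    by (intro uniform_limit_dense_equicontinuous[OF K C _ G(1) lim_C]) auto
  moreover have "uniformly_continuous_on {m..B} ln"
    using \<open>m > 0\<close> by (intro compact_uniformly_continuous continuous_intros) auto
  moreover have "eventually (\<lambda>N. h N ` K \<subseteq> {m..B}) sequentially"
    using eventually_gt_at_top[of 0]
    by eventually_elim (auto simp: h_def intro!: mean_in_interval g_bounds a b)
  ultimately have "uniform_limit K (\<lambda>N x. ln (h N x)) (ln \<circ> G) sequentially"
    using G(2) by (intro uniform_limit_compose) auto
  from tendsto_mean_uniform_limit[OF this a] lim_G show ?thesis
    by (simp add: h_def)
qed

lemma (in prob_space) AE_tendsto_mean_ln_kernel_mean:
  fixes X :: "nat \<Rightarrow> 'a \<Rightarrow> 'x" and T :: "nat \<Rightarrow> 'a \<Rightarrow> 't"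
    and fx :: "'x \<Rightarrow> 'e::{metric_space, second_countable_topology}" and ft :: "'t \<Rightarrow> 'f::metric_space"
    and g :: "'e \<Rightarrow> 'f \<Rightarrow> real"
  assumes iX: "indep_vars (\<lambda>_. Sx) X UNIV" and dX: "\<And>i. distr M Sx (X i) = Px"
    and iT: "indep_vars (\<lambda>_. St) T UNIV" and dT: "\<And>i. distr M St (T i) = Pt"
    and fx: "fx \<in> borel_measurable Sx" "\<And>x. x \<in> space Sx \<Longrightarrow> fx x \<in> K"
    and ft: "ft \<in> borel_measurable St" "\<And>t. t \<in> space St \<Longrightarrow> ft t \<in> L"
    and K: "compact K" and L: "compact L"
    and g: "continuous_on (K \<times> L) (\<lambda>(a, b). g a b)"
    and g_pos: "\<And>a b. a \<in> K \<Longrightarrow> b \<in> L \<Longrightarrow> g a b > 0"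
  shows "AE \<omega> in M. ((\<lambda>N. (\<Sum>i<N. ln ((\<Sum>j<N. g (fx (X i \<omega>)) (ft (T j \<omega>))) / real N)) / real N)
           \<longlongrightarrow> (\<integral>x. ln (\<integral>t. g (fx x) (ft t) \<partial>Pt) \<partial>Px)) sequentially"
proof -
  have X: "X i \<in> M \<rightarrow>\<^sub>M Sx" and T: "T i \<in> M \<rightarrow>\<^sub>M St" for i
    using iX iT unfolding indep_vars_def by blast+
  interpret Pt: prob_space Pt
    using prob_space_distr[OF T] dT by metis
  have Pt: "space Pt = space St" "ft \<in> borel_measurable Pt"
    using dT[of 0] ft(1) by (auto cong: measurable_cong_sets)
  obtain m B where "m > 0" and mB: "\<And>z. z \<in> K \<times> L \<Longrightarrow> (\<lambda>(a, b). g a b) z \<in> {m..B}"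
    by (rule compact_continuous_pos_bounds[OF compact_Times[OF K L] g]) (use g_pos in auto)
  then have g_bounds: "\<And>a b. a \<in> K \<Longrightarrow> b \<in> L \<Longrightarrow> g a b \<in> {m..B}"
    by fastforce
  define G where "G a = (\<integral>t. g a (ft t) \<partial>Pt)" for a
  have slice: "continuous_on L (g a)" if "a \<in> K" for a
    using continuous_on_o_Pair[OF g that] by (simp add: comp_def)
  have G_cont: "continuous_on K G"
    unfolding G_def using Pt.continuous_on_kernel_integral[OF K L g Pt(2)] ft(2) Pt(1) by simp
  have G_bounds: "G a \<in> {m..B}" if "a \<in> K" for a
    unfolding G_def using Pt ft(2) g_bounds[OF that]
    by (intro Pt.integral_continuous_on_comp_in_interval[OF L slice[OF that]]) auto
  have lnG: "continuous_on K (\<lambda>a. ln (G a))"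
    using G_cont G_bounds \<open>m > 0\<close> by (intro continuous_intros) force+
  obtain C where C: "countable C" "C \<subseteq> K" "K \<subseteq> closure C"
    by (rule separable)
  have "AE \<omega> in M. \<forall>c\<in>C. ((\<lambda>N. (\<Sum>j<N. g c (ft (T j \<omega>))) / real N) \<longlongrightarrow> G c) sequentially"
    using C(2) unfolding G_def
    by (subst AE_ball_countable[OF C(1)]) (auto intro!: strong_law_continuous_on_compact[OF iT dT ft L slice])
  moreover have "AE \<omega> in M. ((\<lambda>N. (\<Sum>i<N. ln (G (fx (X i \<omega>)))) / real N)
      \<longlongrightarrow> (\<integral>x. ln (G (fx x)) \<partial>Px)) sequentially"
    by (rule strong_law_continuous_on_compact[OF iX dX fx K lnG])
  ultimately show ?thesis using AE_space
  proof eventually_elim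
    case (elim \<omega>)
    show ?case unfolding G_def[symmetric]
      using measurable_space[OF X elim(3)] measurable_space[OF T elim(3)] fx(2) ft(2)
      by (intro tendsto_mean_ln_kernel_mean[OF K L g g_bounds \<open>m > 0\<close> G_cont G_bounds C(2,3) _ _ _ elim(2)])
         (use elim(1) in auto)
  qed
qed

lemma neg_mean_ln_softmax:
  fixes E :: "nat \<Rightarrow> nat \<Rightarrow> real" and u :: "nat \<Rightarrow> real"
  assumes N: "N > 0" and E: "\<And>i j. E i j > 0"
  shows "- (1 / real N) * (\<Sum>i<N. ln (exp (u i) / (\<Sum>j<N. E i j)))
     = - (\<Sum>i<N. u i) / real N + (\<Sum>i<N. ln ((\<Sum>j<N. E i j) / real N)) / real N + ln (real N)"
proof -
  have "ln (exp (u i) / (\<Sum>j<N. E i j)) = u i - ln ((\<Sum>j<N. E i j) / real N) - ln (real N)" for i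
  proof -
    have "(\<Sum>j<N. E i j) > 0" using N E by (intro sum_pos) auto
    then have "ln (exp (u i) / (\<Sum>j<N. E i j)) = u i - ln (\<Sum>j<N. E i j)"
      "ln ((\<Sum>j<N. E i j) / real N) = ln (\<Sum>j<N. E i j) - ln (real N)"
      using N by (simp_all add: ln_div)
    then show ?thesis by simp
  qed
  then have "(\<Sum>i<N. ln (exp (u i) / (\<Sum>j<N. E i j)))
      = (\<Sum>i<N. u i) - (\<Sum>i<N. ln ((\<Sum>j<N. E i j) / real N)) - real N * ln (real N)"
    by (simp add: sum_subtractf)
  then show ?thesis using N by (simp add: field_simps)
qed

lemma tendsto_contrastive_loss:
  assumes "((\<lambda>N. (\<Sum>i<N. d (fx (xs i)) (ft (ts i)) / tau) / real N) \<longlongrightarrow> L\<^sub>0) sequentially"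
    and "((\<lambda>N. (\<Sum>i<N. ln ((\<Sum>j<N. exp (- d (fx (xs i)) (ft (ts j)) / tau)) / real N)) / real N)
           \<longlongrightarrow> L\<^sub>1) sequentially"
    and "((\<lambda>N. (\<Sum>i<N. ln ((\<Sum>j<N. exp (- d (fx (xs j)) (ft (ts i)) / tau)) / real N)) / real N)
           \<longlongrightarrow> L\<^sub>2) sequentially"
  shows "((\<lambda>N. contrastive_loss fx ft d tau xs ts N - 2 * ln (real N)) \<longlongrightarrow> 2 * L\<^sub>0 + L\<^sub>1 + L\<^sub>2)
           sequentially"
proof -
  let ?D = "\<lambda>N. (\<Sum>i<N. d (fx (xs i)) (ft (ts i)) / tau) / real N"
  let ?A\<^sub>1 = "\<lambda>N. (\<Sum>i<N. ln ((\<Sum>j<N. exp (- d (fx (xs i)) (ft (ts j)) / tau)) / real N)) / real N"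
  let ?A\<^sub>2 = "\<lambda>N. (\<Sum>i<N. ln ((\<Sum>j<N. exp (- d (fx (xs j)) (ft (ts i)) / tau)) / real N)) / real N"
  have decomp: "contrastive_loss fx ft d tau xs ts N - 2 * ln (real N) = 2 * ?D N + ?A\<^sub>1 N + ?A\<^sub>2 N"
    if "N > 0" for N
    unfolding contrastive_loss_def
    using neg_mean_ln_softmax[OF that, of "\<lambda>i j. exp (- d (fx (xs i)) (ft (ts j)) / tau)"
        "\<lambda>i. - d (fx (xs i)) (ft (ts i)) / tau"]
      neg_mean_ln_softmax[OF that, of "\<lambda>i j. exp (- d (fx (xs j)) (ft (ts i)) / tau)"
        "\<lambda>i. - d (fx (xs i)) (ft (ts i)) / tau"]
    by (simp add: sum_negf)
  have "((\<lambda>N. 2 * ?D N + ?A\<^sub>1 N + ?A\<^sub>2 N) \<longlongrightarrow> 2 * L\<^sub>0 + L\<^sub>1 + L\<^sub>2) sequentially"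
    using assms by (intro tendsto_intros)
  moreover have "eventually (\<lambda>N. 2 * ?D N + ?A\<^sub>1 N + ?A\<^sub>2 N
      = contrastive_loss fx ft d tau xs ts N - 2 * ln (real N)) sequentially"
    using eventually_gt_at_top[of "0::nat"] by eventually_elim (rule decomp[symmetric])
  ultimately show ?thesis by (rule Lim_transform_eventually)
qed

theorem theorem3p1:
  fixes M :: "'a measure"
    and Sx :: "'x measure" and St :: "'t measure"
    and P :: "('x \<times> 't) measure"
    and X :: "nat \<Rightarrow> 'a \<Rightarrow> 'x" and T :: "nat \<Rightarrow> 'a \<Rightarrow> 't"
    and fx :: "'x \<Rightarrow> real ^ 'D" and ft :: "'t \<Rightarrow> real ^ 'D"
    and K :: "(real ^ 'D) set"
    and d :: "real ^ 'D \<Rightarrow> real ^ 'D \<Rightarrow> real"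
    and tau :: real
  assumes M: "prob_space M"
    and meas: "\<And>i. (\<lambda>\<omega>. (X i \<omega>, T i \<omega>)) \<in> M \<rightarrow>\<^sub>M Sx \<Otimes>\<^sub>M St"
    and indep: "prob_space.indep_vars M (\<lambda>_. Sx \<Otimes>\<^sub>M St) (\<lambda>i \<omega>. (X i \<omega>, T i \<omega>)) UNIV"
    and distr: "\<And>i. distr M (Sx \<Otimes>\<^sub>M St) (\<lambda>\<omega>. (X i \<omega>, T i \<omega>)) = P"
    and fx_meas: "fx \<in> borel_measurable Sx"
    and ft_meas: "ft \<in> borel_measurable St"
    and K: "compact K"
    and fx_K: "\<And>x. x \<in> space Sx \<Longrightarrow> fx x \<in> K"
    and ft_K: "\<And>t. t \<in> space St \<Longrightarrow> ft t \<in> K"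
    and d_cont: "continuous_on (K \<times> K) (\<lambda>(a, b). d a b)"
    and tau: "tau > 0"
  shows "AE \<omega> in M.
     ((\<lambda>N. contrastive_loss fx ft d tau (\<lambda>i. X i \<omega>) (\<lambda>i. T i \<omega>) N - 2 * ln (real N))
       \<longlongrightarrow>
        2 * (\<integral>z. d (fx (fst z)) (ft (snd z)) / tau \<partial>P)
        + (\<integral>x. ln (\<integral>t. exp (- d (fx x) (ft t) / tau) \<partial>(distr P St snd)) \<partial>(distr P Sx fst))
        + (\<integral>t. ln (\<integral>x. exp (- d (fx x) (ft t) / tau) \<partial>(distr P Sx fst)) \<partial>(distr P St snd)))
     sequentially"
proof -
  interpret prob_space M by (rule M)
  note marginal = indep_identically_distributed_compose[OF indep distr]
  have iX: "indep_vars (\<lambda>_. Sx) X UNIV" and dX: "\<And>i. distr M Sx (X i) = distr P Sx fst"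
    using marginal[OF measurable_fst] by simp_all
  have iT: "indep_vars (\<lambda>_. St) T UNIV" and dT: "\<And>i. distr M St (T i) = distr P St snd"
    using marginal[OF measurable_snd] by simp_all
  have "continuous_on (K \<times> K) (\<lambda>z. exp (- (\<lambda>(a, b). d a b) z / tau))"
    "continuous_on (K \<times> K) (\<lambda>z. exp (- (\<lambda>(a, b). d b a) z / tau))"
    "continuous_on (K \<times> K) (\<lambda>z. (\<lambda>(a, b). d a b) z / tau)"
    using tau by (intro continuous_intros d_cont continuous_on_case_prod_swap[OF d_cont]; simp)+
  then have cont: "continuous_on (K \<times> K) (\<lambda>(a, b). exp (- d a b / tau))"
    "continuous_on (K \<times> K) (\<lambda>(a, b). exp (- d b a / tau))"
    "continuous_on (K \<times> K) (\<lambda>(a, b). d a b / tau)"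
    by (simp_all add: case_prod_beta')
  have encode_meas: "(\<lambda>z. (fx (fst z), ft (snd z))) \<in> Sx \<Otimes>\<^sub>M St \<rightarrow>\<^sub>M borel"
    by (subst borel_prod[symmetric]) (use fx_meas ft_meas in measurable)
  have encode_K: "(fx (fst z), ft (snd z)) \<in> K \<times> K" if "z \<in> space (Sx \<Otimes>\<^sub>M St)" for z
    using that fx_K ft_K by (auto simp: space_pair_measure)
  note strong_law_continuous_on_compact[OF indep distr encode_meas encode_K compact_Times[OF K K] cont(3), simplified]
  moreover note AE_tendsto_mean_ln_kernel_mean[OF iX dX iT dT fx_meas fx_K ft_meas ft_K K K cont(1), simplified]
  moreover note AE_tendsto_mean_ln_kernel_mean[OF iT dT iX dX ft_meas ft_K fx_meas fx_K K K cont(2), simplified]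
  ultimately show ?thesis
    by eventually_elim (rule tendsto_contrastive_loss; simp)
qed

end
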